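(* Let $\mathbf{K}$ be a linear canonical transformation of $\mathbb{C}^{2n}$. The following are equivalent: (i) $-1\notin\operatorname{Spec}\mathbf{K}$ and $\operatorname{Re}\sigma\big(\overline{\mathbf{z}},\,i(1+\mathbf{K})^{-1}(1-\mathbf{K})\mathbf{z}\big)<0$ for all $\mathbf{z}\in\mathbb{C}^{2n}\setminus\{0\}$; (ii) $-1\notin\operatorname{Spec}\mathbf{K}$ and $\operatorname{Re}\sigma\big(\mathbf{z},\,i(1+\mathbf{K})^{-1}(1-\mathbf{K})\mathbf{z}\big)<0$ for all $\mathbf{z}\in\mathbb{R}^{2n}\setminus\{0\}$; (iii) $\mathbf{K}$ is strictly positive.
   Context: Points of $\mathbb{C}^{2n}$ are written $\mathbf{z}=(x,\xi)$, and $\sigma((x_1,\xi_1),(x_2,\xi_2))=\xi_1\cdot x_2-\xi_2\cdot x_1$ (complex bilinear, no conjugation). A complex linear map $\mathbf{K}$ of $\mathbb{C}^{2n}$ is canonical if $\sigma(\mathbf{K}\mathbf{z},\mathbf{K}\mathbf{w})=\sigma(\mathbf{z},\mathbf{w})$ for all $\mathbf{z},\mathbf{w}$; it is strictly positive if it is canonical and $i\big(\sigma(\overline{\mathbf{K}\mathbf{z}},\mathbf{K}\mathbf{z})-\sigma(\overline{\mathbf{z}},\mathbf{z})\big)>0$ for all $\mathbf{z}\in\mathbb{C}^{2n}\setminus\{0\}$. *)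

theory Defs
  imports "HOL-Analysis.Analysis" "HOL-Library.Complex_Order"
begin

text \<open>Points of C^{2n} are vectors indexed by 'n + 'n: the component at Inl j is x_j,
the component at Inr j is xi_j. Linear maps of C^{2n} are (complex) matrices.\<close>

type_synonym 'n pt = "complex ^ ('n + 'n)"
type_synonym 'n lmap = "complex ^ ('n + 'n) ^ ('n + 'n)"

definition xpart :: "'n::finite pt \<Rightarrow> 'n \<Rightarrow> complex" where
  "xpart z j = z $ Inl j"

definition xipart :: "'n::finite pt \<Rightarrow> 'n \<Rightarrow> complex" where
  "xipart z j = z $ Inr j"

definition symp :: "'n::finite pt \<Rightarrow> 'n pt \<Rightarrow> complex" where
  "symp z w = (\<Sum>j\<in>UNIV. xipart z j * xpart w j) - (\<Sum>j\<in>UNIV. xipart w j * xpart z j)"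

definition cvec :: "'n::finite pt \<Rightarrow> 'n pt" where
  "cvec z = (\<chi> k. cnj (z $ k))"

definition canonical :: "'n::finite lmap \<Rightarrow> bool" where
  "canonical K \<longleftrightarrow> (\<forall>z w. symp (K *v z) (K *v w) = symp z w)"

definition strictly_positive :: "'n::finite lmap \<Rightarrow> bool" where
  "strictly_positive K \<longleftrightarrow> canonical K \<and>
     (\<forall>z. z \<noteq> 0 \<longrightarrow> \<i> * (symp (cvec (K *v z)) (K *v z) - symp (cvec z) z) > 0)"

definition spec :: "'n::finite lmap \<Rightarrow> complex set" where
  "spec K = {c. \<exists>v. v \<noteq> 0 \<and> K *v v = c *s v}"

definition rvec :: "real ^ ('n::finite + 'n) \<Rightarrow> 'n pt" where
  "rvec y = (\<chi> k. complex_of_real (y $ k))"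

end

theory Submission
  imports Defs
begin

text \<open>The Cayley transform \<open>C = (1 + K)\<^sup>-\<^sup>1 (1 - K)\<close> maps \<open>u + K u\<close> to \<open>u - K u\<close>, and
\<open>u \<mapsto> u + K u\<close> is onto when \<open>-1\<close> is not an eigenvalue. Expanding by bilinearity,
\<open>Re \<sigma>(conj z, i C z)\<close> at \<open>z = u + K u\<close> equals \<open>-i(\<sigma>(conj (K u), K u) - \<sigma>(conj u, u))\<close>
(the cross terms are purely imaginary), which gives (i) \<longleftrightarrow> (iii); a strictly positive \<open>K\<close>
cannot have the eigenvalue \<open>-1\<close>, since \<open>K v = -v\<close> leaves \<open>\<sigma>(conj v, v)\<close> unchanged.
If \<open>K\<close> is canonical, \<open>(w, z) \<mapsto> \<sigma>(w, C z)\<close> is symmetric, so for \<open>z = x + i y\<close> with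
\<open>x, y\<close> real the quadratic form splits as \<open>\<sigma>(x, i C x) + \<sigma>(y, i C y)\<close>: negativity on real
vectors is negativity on all of \<open>\<complex>\<^sup>2\<^sup>n\<close>, which gives (i) \<longleftrightarrow> (ii).\<close>

lemma symp_add_left: "symp (a + b) w = symp a w + symp b w"
  by (simp add: symp_def xpart_def xipart_def sum.distrib algebra_simps)

lemma symp_add_right: "symp w (a + b) = symp w a + symp w b"
  by (simp add: symp_def xpart_def xipart_def sum.distrib algebra_simps)

lemma symp_diff_left: "symp (a - b) w = symp a w - symp b w"
  by (simp add: symp_def xpart_def xipart_def sum_subtractf algebra_simps)

lemma symp_diff_right: "symp w (a - b) = symp w a - symp w b"
  by (simp add: symp_def xpart_def xipart_def sum_subtractf algebra_simps)

lemma symp_scale_left: "symp (c *s a) w = c * symp a w"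
  by (simp add: symp_def xpart_def xipart_def sum_distrib_left algebra_simps)

lemma symp_scale_right: "symp w (c *s a) = c * symp w a"
  by (simp add: symp_def xpart_def xipart_def sum_distrib_left algebra_simps)

lemmas symp_bilinear = symp_add_left symp_add_right symp_diff_left symp_diff_right
  symp_scale_left symp_scale_right

lemma symp_zero_left [simp]: "symp 0 w = 0"
  by (simp add: symp_def xpart_def xipart_def)

lemma symp_antisym: "symp a b = - symp b a"
  by (simp add: symp_def)

lemma symp_neg_neg [simp]: "symp (- a) (- b) = symp a b"
  by (simp add: symp_def xpart_def xipart_def)

lemma cvec_add: "cvec (a + b) = cvec a + cvec b"
  by (simp add: cvec_def vec_eq_iff)

lemma cvec_cvec [simp]: "cvec (cvec a) = a"
  by (simp add: cvec_def vec_eq_iff)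

lemma cvec_rvec [simp]: "cvec (rvec x) = rvec x"
  by (simp add: cvec_def rvec_def vec_eq_iff)

lemma rvec_zero [simp]: "rvec 0 = 0"
  by (simp add: rvec_def vec_eq_iff)

lemma rvec_eq_0_iff [simp]: "rvec x = 0 \<longleftrightarrow> x = 0"
  by (simp add: rvec_def vec_eq_iff)

lemma cnj_symp: "cnj (symp a b) = symp (cvec a) (cvec b)"
  by (simp add: symp_def xpart_def xipart_def cvec_def)

lemma cnj_symp_cvec: "cnj (symp (cvec a) b) = - symp (cvec b) a"
  by (simp add: cnj_symp symp_antisym[of a])

lemma Re_symp_cvec_self [simp]: "Re (symp (cvec z) z) = 0"
  using arg_cong[OF cnj_symp_cvec[of z z], of Re] by simp

lemma pt_real_imag_decomposition:
  obtains x y where "z = rvec x + \<i> *s rvec y" and "cvec z = rvec x - \<i> *s rvec y"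
proof
  define x where "x = (\<chi> k. Re (z $ k))"
  define y where "y = (\<chi> k. Im (z $ k))"
  show z: "z = rvec x + \<i> *s rvec y"
    by (simp add: x_def y_def rvec_def vec_eq_iff complex_eq_iff)
  show "cvec z = rvec (\<chi> k. Re (z $ k)) - \<i> *s rvec (\<chi> k. Im (z $ k))"
    by (simp add: cvec_def rvec_def vec_eq_iff complex_eq_iff)
qed

lemma symp_form_neg_def_iff_real:
  fixes M :: "'n::finite lmap"
  assumes sym: "\<And>w z. symp w (M *v z) = symp z (M *v w)"
  shows "(\<forall>z::'n pt. z \<noteq> 0 \<longrightarrow> Re (symp (cvec z) (\<i> *s (M *v z))) < 0) \<longleftrightarrow>
         (\<forall>y::real ^ ('n + 'n). y \<noteq> 0 \<longrightarrow> Re (symp (rvec y) (\<i> *s (M *v rvec y))) < 0)"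
    (is "(\<forall>z. z \<noteq> 0 \<longrightarrow> ?Q (cvec z) z < 0) \<longleftrightarrow> (\<forall>y. y \<noteq> 0 \<longrightarrow> ?Q (rvec y) (rvec y) < 0)")
proof
  assume "\<forall>z. z \<noteq> 0 \<longrightarrow> ?Q (cvec z) z < 0"
  then show "\<forall>y. y \<noteq> 0 \<longrightarrow> ?Q (rvec y) (rvec y) < 0"
    by (metis cvec_rvec rvec_eq_0_iff)
next
  assume real_neg: "\<forall>y. y \<noteq> 0 \<longrightarrow> ?Q (rvec y) (rvec y) < 0"
  then have real_nonpos: "?Q (rvec y) (rvec y) \<le> 0" for y
    by (cases "y = 0") (auto simp: less_imp_le)
  show "\<forall>z. z \<noteq> 0 \<longrightarrow> ?Q (cvec z) z < 0"
  proof (intro allI impI)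
    fix z :: "'n pt"
    assume "z \<noteq> 0"
    obtain x y where z: "z = rvec x + \<i> *s rvec y" and cz: "cvec z = rvec x - \<i> *s rvec y"
      by (rule pt_real_imag_decomposition)
    have "symp (cvec z) (\<i> *s (M *v z)) =
        symp (rvec x) (\<i> *s (M *v rvec x)) + symp (rvec y) (\<i> *s (M *v rvec y))
        + \<i> * \<i> * (symp (rvec x) (M *v rvec y) - symp (rvec y) (M *v rvec x))"
      unfolding cz unfolding z
      by (simp add: symp_bilinear matrix_vector_right_distrib vector_scalar_commute algebra_simps)
    then have split: "?Q (cvec z) z = ?Q (rvec x) (rvec x) + ?Q (rvec y) (rvec y)"
      using sym[of "rvec x" "rvec y"] by simp
    from \<open>z \<noteq> 0\<close> have "x \<noteq> 0 \<or> y \<noteq> 0"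
      using z by auto
    then show "?Q (cvec z) z < 0"
      using split real_neg real_nonpos[of x] real_nonpos[of y] by force
  qed
qed

lemma matrix_inv_mult_cancel:
  fixes A :: "'a::field ^ 'n ^ 'n"
  assumes "invertible A"
  shows "A *v (matrix_inv A *v z) = z" and "matrix_inv A *v (A *v z) = z"
proof -
  have "A ** matrix_inv A = mat 1 \<and> matrix_inv A ** A = mat 1"
    using assms unfolding invertible_def matrix_inv_def by (rule someI_ex)
  then show "A *v (matrix_inv A *v z) = z" and "matrix_inv A *v (A *v z) = z"
    by (simp_all add: matrix_vector_mul_assoc)
qed

definition cayley :: "'n::finite lmap \<Rightarrow> 'n lmap" where
  "cayley K = matrix_inv (mat 1 + K) ** (mat 1 - K)"

lemma one_plus_apply: "(mat 1 + K) *v u = u + K *v u"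
  by (simp add: matrix_vector_mult_add_rdistrib)

lemma one_plus_apply_eq_0_iff:
  assumes "-1 \<notin> spec K"
  shows "u + K *v u = 0 \<longleftrightarrow> u = 0"
proof
  assume "u + K *v u = 0"
  then have "K *v u = (-1) *s u"
    by (simp add: vec_eq_iff eq_neg_iff_add_eq_0 add.commute)
  with assms show "u = 0"
    unfolding spec_def by blast
qed simp

lemma invertible_one_plus:
  assumes "-1 \<notin> spec K"
  shows "invertible (mat 1 + K)"
  using one_plus_apply_eq_0_iff[OF assms]
  by (metis invertible_left_inverse matrix_left_invertible_ker one_plus_apply)

lemma one_plus_surj:
  assumes "-1 \<notin> spec K"
  obtains u where "z = u + K *v u"
  using matrix_inv_mult_cancel(1)[OF invertible_one_plus[OF assms]] one_plus_apply by metis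

lemma cayley_apply:
  assumes "-1 \<notin> spec K"
  shows "cayley K *v (u + K *v u) = u - K *v u"
proof -
  have "(mat 1 - K) *v (u + K *v u) = (mat 1 + K) *v (u - K *v u)"
    by (simp add: matrix_vector_mult_add_rdistrib matrix_vector_mult_diff_rdistrib
        matrix_vector_right_distrib vec.diff algebra_simps)
  then show ?thesis
    unfolding cayley_def
    by (simp add: matrix_vector_mul_assoc[symmetric]
        matrix_inv_mult_cancel(2)[OF invertible_one_plus[OF assms]])
qed

lemma symp_cayley_sym:
  assumes "canonical K" and "-1 \<notin> spec K"
  shows "symp w (cayley K *v z) = symp z (cayley K *v w)"
proof -
  obtain u where u: "z = u + K *v u" using one_plus_surj[OF assms(2)] .
  obtain v where v: "w = v + K *v v" using one_plus_surj[OF assms(2)] .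
  have "symp (K *v v) (K *v u) = symp v u" "symp (K *v u) (K *v v) = symp u v"
    using assms(1) unfolding canonical_def by auto
  then show ?thesis
    unfolding u v cayley_apply[OF assms(2)]
    using symp_antisym[of v u] symp_antisym[of "K *v v" u] symp_antisym[of v "K *v u"]
    by (simp add: symp_bilinear algebra_simps)
qed

lemma Re_symp_cayley_one_plus:
  assumes "-1 \<notin> spec K"
  shows "Re (symp (cvec (u + K *v u)) (\<i> *s (cayley K *v (u + K *v u))))
       = - Re (\<i> * (symp (cvec (K *v u)) (K *v u) - symp (cvec u) u))"
proof -
  let ?c = "symp (cvec (K *v u)) u - symp (cvec u) (K *v u)"
  have expand: "symp (cvec (u + K *v u)) (\<i> *s (cayley K *v (u + K *v u))) =
      - \<i> * (symp (cvec (K *v u)) (K *v u) - symp (cvec u) u) + \<i> * ?c"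
    unfolding cayley_apply[OF assms] by (simp add: symp_bilinear cvec_add algebra_simps)
  have "Im ?c = 0"
    using arg_cong[OF cnj_symp_cvec[of u "K *v u"], of Im] by simp
  then show ?thesis
    unfolding expand by simp
qed

lemma positive_iff_Re_positive_i_symp:
  "\<i> * (symp (cvec a) a - symp (cvec b) b) > 0 \<longleftrightarrow>
   Re (\<i> * (symp (cvec a) a - symp (cvec b) b)) > 0"
  by (simp add: less_complex_def)

lemma strictly_positive_imp_minus_one_notin_spec:
  assumes "strictly_positive K"
  shows "-1 \<notin> spec K"
proof
  assume "-1 \<in> spec K"
  then obtain v where "v \<noteq> 0" and Kv: "K *v v = - v"
    unfolding spec_def by (auto simp: vec_eq_iff)
  have "cvec (- v) = - cvec v"
    by (simp add: cvec_def vec_eq_iff)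
  then have "symp (cvec (K *v v)) (K *v v) = symp (cvec v) v"
    by (simp add: Kv)
  with assms \<open>v \<noteq> 0\<close> show False
    unfolding strictly_positive_def by force
qed

lemma strictly_positive_iff_cayley:
  assumes "canonical K"
  shows "strictly_positive K \<longleftrightarrow> -1 \<notin> spec K \<and>
    (\<forall>z::'n::finite pt. z \<noteq> 0 \<longrightarrow> Re (symp (cvec z) (\<i> *s (cayley K *v z))) < 0)"
proof (cases "-1 \<in> spec K")
  case True
  then show ?thesis
    using strictly_positive_imp_minus_one_notin_spec by blast
next
  case False
  have "(\<forall>z. z \<noteq> 0 \<longrightarrow> Re (symp (cvec z) (\<i> *s (cayley K *v z))) < 0) \<longleftrightarrow>
        (\<forall>u. u + K *v u \<noteq> 0 \<longrightarrow>
           Re (symp (cvec (u + K *v u)) (\<i> *s (cayley K *v (u + K *v u)))) < 0)"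
    by (metis one_plus_surj[OF False])
  also have "\<dots> \<longleftrightarrow> (\<forall>u. u \<noteq> 0 \<longrightarrow> \<i> * (symp (cvec (K *v u)) (K *v u) - symp (cvec u) u) > 0)"
    by (simp add: one_plus_apply_eq_0_iff[OF False] Re_symp_cayley_one_plus[OF False]
        positive_iff_Re_positive_i_symp)
  finally show ?thesis
    using False assms unfolding strictly_positive_def by blast
qed

theorem proposition4p3:
  fixes K :: "'n::finite lmap"
  assumes "canonical K"
  shows "(((-1) \<notin> spec K \<and>
           (\<forall>z::'n pt. z \<noteq> 0 \<longrightarrow>
              Re (symp (cvec z) (\<i> *s (matrix_inv (mat 1 + K) ** (mat 1 - K) *v z))) < 0))
     \<longleftrightarrow> ((-1) \<notin> spec K \<and>
           (\<forall>y::real ^ ('n + 'n). y \<noteq> 0 \<longrightarrow>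
              Re (symp (rvec y) (\<i> *s (matrix_inv (mat 1 + K) ** (mat 1 - K) *v rvec y))) < 0)))
   \<and> (((-1) \<notin> spec K \<and>
           (\<forall>y::real ^ ('n + 'n). y \<noteq> 0 \<longrightarrow>
              Re (symp (rvec y) (\<i> *s (matrix_inv (mat 1 + K) ** (mat 1 - K) *v rvec y))) < 0))
     \<longleftrightarrow> strictly_positive K)"
  unfolding cayley_def[symmetric]
  using symp_form_neg_def_iff_real[OF symp_cayley_sym[OF assms]] strictly_positive_iff_cayley[OF assms]
  by blast

end
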